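(* Let $n\ge2$, $K\in\mathcal S_n$, let $0<R<1$ and assume $K\subseteq B(0,R)$ and $K^c\subseteq B(0,R)$. Then \[ B\Big(0,\sqrt{\tfrac54-R^2}-\tfrac12\Big)\subseteq K^c\cup(-K). \]
   Context: $B(x,r)$ is the closed Euclidean ball. For $A\subseteq\mathbb R^n$, $A^c=\bigcap_{x\in A}B(x,1)$ (with $\emptyset^c=\mathbb R^n$). $\mathcal S_n$ is the class of all sets of the form $\bigcap_{x\in A}B(x,1)$, $A\subseteq\mathbb R^n$. $-K=\{-x:x\in K\}$. *)

theory Defs
  imports "HOL-Analysis.Analysis"
begin

text \<open>The dual (spherical polar) of a set: intersection of closed unit balls centred at its
points; the empty intersection is the whole space.\<close>
definition ball_dual :: "'a::euclidean_space set \<Rightarrow> 'a set" where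
  "ball_dual A = (\<Inter>x\<in>A. cball x 1)"

definition S_class :: "'a::euclidean_space set set" where
  "S_class = {K. \<exists>A. K = ball_dual A}"

end

theory Submission
  imports Defs
begin

text \<open>If \<open>x \<notin> K\<^sup>c\<close> and \<open>-x \<notin> K\<close>, there are \<open>y \<in> K\<close> with \<open>|x - y| > 1\<close> and, since
  \<open>K = K\<^sup>c\<^sup>c\<close>, some \<open>a \<in> K\<^sup>c\<close> with \<open>|x + a| > 1\<close>. As \<open>|y - a| \<le> 1\<close>, expanding the squares gives
  \<open>|x - y|\<^sup>2 + |x + a|\<^sup>2 \<le> 2(|x|\<^sup>2 + |x|) + |y|\<^sup>2 + |a|\<^sup>2 \<le> 2(|x|\<^sup>2 + |x| + R\<^sup>2)\<close>, and the radius
  \<open>\<surd>(5/4 - R\<^sup>2) - 1/2\<close> is exactly where \<open>|x|\<^sup>2 + |x| = 1 - R\<^sup>2\<close>, so the sum is at most 2,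
  a contradiction.\<close>

lemma ball_dual_antimono: "A \<subseteq> B \<Longrightarrow> ball_dual B \<subseteq> ball_dual A"
  unfolding ball_dual_def by blast

lemma subset_ball_dual_ball_dual: "A \<subseteq> ball_dual (ball_dual A)"
  unfolding ball_dual_def by (auto simp: dist_commute)

lemma S_class_iff_ball_dual_ball_dual: "K \<in> S_class \<longleftrightarrow> ball_dual (ball_dual K) = K"
proof
  assume "K \<in> S_class"
  then obtain A where K: "K = ball_dual A"
    unfolding S_class_def by blast
  have "ball_dual (ball_dual K) \<subseteq> K"
    unfolding K by (intro ball_dual_antimono subset_ball_dual_ball_dual)
  with subset_ball_dual_ball_dual show "ball_dual (ball_dual K) = K"
    by blast
next
  assume "ball_dual (ball_dual K) = K"
  then show "K \<in> S_class"
    unfolding S_class_def by (auto intro: exI[where x = "ball_dual K"])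
qed

lemma not_mem_S_classE:
  assumes "K \<in> S_class" and "z \<notin> K"
  obtains a where "a \<in> ball_dual K" and "dist a z > 1"
proof -
  from assms have "z \<notin> ball_dual (ball_dual K)"
    by (simp add: S_class_iff_ball_dual_ball_dual)
  then obtain a where "a \<in> ball_dual K" and "z \<notin> cball a 1"
    unfolding ball_dual_def by blast
  then show thesis
    using that by (simp add: not_le)
qed

lemma norm_diff_sq_add_norm_add_sq_le:
  fixes x y a :: "'a::real_inner"
  assumes "norm (y - a) \<le> 1"
  shows "(norm (x - y))\<^sup>2 + (norm (x + a))\<^sup>2 \<le> 2 * ((norm x)\<^sup>2 + norm x) + (norm y)\<^sup>2 + (norm a)\<^sup>2"
proof -
  have "x \<bullet> (a - y) \<le> norm x * norm (y - a)"
    using Cauchy_Schwarz_ineq2[of x "y - a"] by (simp add: inner_diff_right)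
  also have "\<dots> \<le> norm x"
    using assms by (simp add: mult_left_le)
  finally have "x \<bullet> a - x \<bullet> y \<le> norm x"
    by (simp add: inner_diff_right)
  moreover have "(norm (x - y))\<^sup>2 = (norm x)\<^sup>2 - 2 * (x \<bullet> y) + (norm y)\<^sup>2"
    by (simp add: power2_norm_eq_inner inner_diff_left inner_diff_right inner_commute)
  moreover have "(norm (x + a))\<^sup>2 = (norm x)\<^sup>2 + 2 * (x \<bullet> a) + (norm a)\<^sup>2"
    by (simp add: power2_norm_eq_inner inner_add_left inner_add_right inner_commute)
  ultimately show ?thesis
    by argo
qed

lemma mem_ball_dual_union_reflection:
  fixes K :: "'a::euclidean_space set"
  assumes "K \<in> S_class"
    and "K \<subseteq> cball 0 R" and "ball_dual K \<subseteq> cball 0 R"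
    and "(norm x)\<^sup>2 + norm x \<le> 1 - R\<^sup>2"
  shows "x \<in> ball_dual K \<union> uminus ` K"
proof (rule ccontr)
  assume "x \<notin> ball_dual K \<union> uminus ` K"
  then have "x \<notin> ball_dual K" and "-x \<notin> K"
    by (auto simp: image_iff intro: bexI[where x = "-x"])
  then obtain y where y: "y \<in> K" "dist y x > 1"
    unfolding ball_dual_def by (auto simp: not_le)
  obtain a where a: "a \<in> ball_dual K" "dist a (-x) > 1"
    using not_mem_S_classE[OF assms(1) \<open>-x \<notin> K\<close>] .
  have "norm (y - a) \<le> 1"
    using a(1) y(1) by (auto simp: ball_dual_def dist_norm)
  then have sum_le: "(norm (x - y))\<^sup>2 + (norm (x + a))\<^sup>2 \<le> 2 * ((norm x)\<^sup>2 + norm x) + (norm y)\<^sup>2 + (norm a)\<^sup>2"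
    by (rule norm_diff_sq_add_norm_add_sq_le)
  have "(norm y)\<^sup>2 \<le> R\<^sup>2" and "(norm a)\<^sup>2 \<le> R\<^sup>2"
    using y(1) a(1) assms(2,3) by (auto intro!: power_mono)
  moreover have "(norm (x - y))\<^sup>2 > 1" and "(norm (x + a))\<^sup>2 > 1"
    using y(2) a(2) by (simp_all add: dist_norm norm_minus_commute add.commute one_less_power)
  ultimately show False
    using sum_le assms(4) by argo
qed

lemma norm_sq_add_norm_le_of_le_radius:
  fixes R r :: real
  assumes "R\<^sup>2 \<le> 5/4" and "r \<le> sqrt (5/4 - R\<^sup>2) - 1/2" and "0 \<le> r"
  shows "r\<^sup>2 + r \<le> 1 - R\<^sup>2"
proof -
  have "(r + 1/2)\<^sup>2 \<le> (sqrt (5/4 - R\<^sup>2))\<^sup>2"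
    using assms(2,3) by (intro power_mono) auto
  also have "\<dots> = 5/4 - R\<^sup>2"
    using assms(1) by simp
  finally show ?thesis
    by (simp add: power2_eq_square algebra_simps)
qed

theorem theorem3p25:
  fixes K :: "'a::euclidean_space set" and R :: real
  assumes "DIM('a) \<ge> 2"
    and "K \<in> S_class"
    and "0 < R" and "R < 1"
    and "K \<subseteq> cball 0 R"
    and "ball_dual K \<subseteq> cball 0 R"
  shows "cball 0 (sqrt (5/4 - R\<^sup>2) - 1/2) \<subseteq> ball_dual K \<union> uminus ` K"
proof
  fix x :: 'a
  assume "x \<in> cball 0 (sqrt (5/4 - R\<^sup>2) - 1/2)"
  moreover have "R\<^sup>2 \<le> 5/4"
    using assms(3,4) power_le_one[of R 2] by simp
  ultimately have "(norm x)\<^sup>2 + norm x \<le> 1 - R\<^sup>2"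
    by (intro norm_sq_add_norm_le_of_le_radius) auto
  with assms(2,5,6) show "x \<in> ball_dual K \<union> uminus ` K"
    by (rule mem_ball_dual_union_reflection)
qed

end
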